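(* Let $G$ be a cubic graph (multigraphs allowed) with cyclic connectivity $k$, and let $G'$ arise from $G$ by an I-extension, with $e$ the edge added in the I-extension. Then the cyclic connectivity of $G'$ is either at least $k$ or equal to the length of a shortest cycle of $G'$ containing $e$. In particular, if $k\ge 4$ and $e$ lies in neither a triangle nor a pair of parallel edges of $G'$, then the cyclic connectivity of $G'$ is at least $4$.
   Context: An I-extension of a graph consists of subdividing two edges (possibly the same edge twice, in which case a parallel edge is created) by inserting a new vertex of degree $2$ into each, and joining the two new vertices by a new edge $e$. An edge cut is cycle-separating if its removal leaves at least two components containing cycles; the cyclic connectivity of a graph is the minimum size of a cycle-separating edge cut. *)

theory Defs
  imports Main "HOL-Library.Extended_Nat"
begin

text \<open>Finite loopless multigraphs: vertex set V, edge set E and an incidence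
  map inc assigning to each edge its two-element set of end vertices.
  Parallel edges are allowed (distinct edges with equal inc).\<close>

definition multigraph :: "'v set \<Rightarrow> 'e set \<Rightarrow> ('e \<Rightarrow> 'v set) \<Rightarrow> bool" where
  "multigraph V E inc \<longleftrightarrow> finite V \<and> finite E \<and>
     (\<forall>e\<in>E. inc e \<subseteq> V \<and> card (inc e) = 2)"

definition degree :: "'v set \<Rightarrow> 'e set \<Rightarrow> ('e \<Rightarrow> 'v set) \<Rightarrow> 'v \<Rightarrow> nat" where
  "degree V E inc v = card {e\<in>E. v \<in> inc e}"

definition cubic :: "'v set \<Rightarrow> 'e set \<Rightarrow> ('e \<Rightarrow> 'v set) \<Rightarrow> bool" where
  "cubic V E inc \<longleftrightarrow> multigraph V E inc \<and> (\<forall>v\<in>V. degree V E inc v = 3)"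

definition is_cycle :: "'v set \<Rightarrow> 'e set \<Rightarrow> ('e \<Rightarrow> 'v set) \<Rightarrow> 'v list \<Rightarrow> 'e list \<Rightarrow> bool" where
  "is_cycle V E inc vs es \<longleftrightarrow> length vs = length es \<and> length es \<ge> 2 \<and>
     distinct vs \<and> distinct es \<and> set vs \<subseteq> V \<and> set es \<subseteq> E \<and>
     (\<forall>i < length es. inc (es ! i) = {vs ! i, vs ! ((i + 1) mod length es)})"

definition connected_in :: "'v set \<Rightarrow> 'e set \<Rightarrow> ('e \<Rightarrow> 'v set) \<Rightarrow> 'v \<Rightarrow> 'v \<Rightarrow> bool" where
  "connected_in V E inc u w \<longleftrightarrow> u \<in> V \<and> w \<in> V \<and>
     (\<lambda>a b. \<exists>e\<in>E. inc e = {a, b})\<^sup>*\<^sup>* u w"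

definition edge_cut :: "'v set \<Rightarrow> 'e set \<Rightarrow> ('e \<Rightarrow> 'v set) \<Rightarrow> 'e set \<Rightarrow> bool" where
  "edge_cut V E inc S \<longleftrightarrow> (\<exists>X. X \<subseteq> V \<and> X \<noteq> {} \<and> X \<noteq> V \<and>
     S = {e\<in>E. card (inc e \<inter> X) = 1})"

definition cycle_separating :: "'v set \<Rightarrow> 'e set \<Rightarrow> ('e \<Rightarrow> 'v set) \<Rightarrow> 'e set \<Rightarrow> bool" where
  "cycle_separating V E inc S \<longleftrightarrow> edge_cut V E inc S \<and>
     (\<exists>vs1 es1 vs2 es2. is_cycle V (E - S) inc vs1 es1 \<and> is_cycle V (E - S) inc vs2 es2 \<and>
        \<not> connected_in V (E - S) inc (hd vs1) (hd vs2))"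

text \<open>Cyclic connectivity: minimum size of a cycle-separating edge cut
  (\<infinity> if there is none).\<close>

definition cyclic_connectivity :: "'v set \<Rightarrow> 'e set \<Rightarrow> ('e \<Rightarrow> 'v set) \<Rightarrow> enat" where
  "cyclic_connectivity V E inc = (INF S \<in> {S. cycle_separating V E inc S}. enat (card S))"

text \<open>Length of a shortest cycle containing edge e (\<infinity> if there is none).\<close>

definition shortest_cycle_through :: "'v set \<Rightarrow> 'e set \<Rightarrow> ('e \<Rightarrow> 'v set) \<Rightarrow> 'e \<Rightarrow> enat" where
  "shortest_cycle_through V E inc e =
     (INF es \<in> {es. \<exists>vs. is_cycle V E inc vs es \<and> e \<in> set es}. enat (length es))"

definition subdivide ::
  "'v set \<Rightarrow> 'e set \<Rightarrow> ('e \<Rightarrow> 'v set) \<Rightarrow> 'e \<Rightarrow> 'v \<Rightarrow>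
   'v set \<Rightarrow> 'e set \<Rightarrow> ('e \<Rightarrow> 'v set) \<Rightarrow> bool" where
  "subdivide V E inc a x V' E' inc' \<longleftrightarrow> a \<in> E \<and> x \<notin> V \<and>
     (\<exists>f1 f2 u w. inc a = {u, w} \<and> f1 \<notin> E \<and> f2 \<notin> E \<and> f1 \<noteq> f2 \<and>
        V' = insert x V \<and> E' = (E - {a}) \<union> {f1, f2} \<and>
        inc' f1 = {u, x} \<and> inc' f2 = {x, w} \<and> (\<forall>g \<in> E - {a}. inc' g = inc g))"

text \<open>I-extension: subdivide an edge by x, then subdivide an edge of the result by y
  (an edge of the original graph other than the first one, or one of the two halves
  of the first one, which amounts to subdividing the same edge twice), then join
  x and y by a new edge e.\<close>

definition I_extension ::
  "'v set \<Rightarrow> 'e set \<Rightarrow> ('e \<Rightarrow> 'v set) \<Rightarrow>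
   'v set \<Rightarrow> 'e set \<Rightarrow> ('e \<Rightarrow> 'v set) \<Rightarrow> 'e \<Rightarrow> bool" where
  "I_extension V E inc V' E' inc' e \<longleftrightarrow>
     (\<exists>a x V1 E1 inc1 b y V2 E2 inc2.
        subdivide V E inc a x V1 E1 inc1 \<and> subdivide V1 E1 inc1 b y V2 E2 inc2 \<and>
        e \<notin> E2 \<and> V' = V2 \<and> E' = insert e E2 \<and> inc' e = {x, y} \<and>
        (\<forall>g\<in>E2. inc' g = inc2 g))"

end

theory Submission
  imports Defs
begin

text \<open>A cycle-separating cut can be taken to be the boundary \<open>\<delta>(X)\<close> of a vertex set \<open>X\<close> with a cycle
  on each side. Cycles of \<open>G'\<close> avoiding \<open>e\<close> come from cycles of \<open>G\<close> on the same vertices, and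
  boundaries do not shrink from \<open>G\<close> to \<open>G'\<close>; so if a minimum cycle-separating cut \<open>\<delta>(A)\<close> of \<open>G'\<close>
  has fewer than \<open>k\<close> edges, one side \<open>Z\<close> of it has all its cycles through \<open>e\<close>. In a cubic graph
  \<open>3|W| = 2|E(W)| + |\<delta>(W)|\<close>, and an acyclic graph has fewer edges than vertices; counting
  vertices with these two facts shows that \<open>|\<delta>(Z)|\<close> is the length of a shortest cycle through \<open>e\<close>.\<close>

definition boundary :: "'e set \<Rightarrow> ('e \<Rightarrow> 'v set) \<Rightarrow> 'v set \<Rightarrow> 'e set" where
  "boundary E inc W = {g\<in>E. card (inc g \<inter> W) = 1}"

definition cycle_within :: "'v set \<Rightarrow> 'e set \<Rightarrow> ('e \<Rightarrow> 'v set) \<Rightarrow> 'v set \<Rightarrow> bool" where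
  "cycle_within V E inc W \<longleftrightarrow> (\<exists>vs es. is_cycle V E inc vs es \<and> set vs \<subseteq> W)"

definition separates_cycles :: "'v set \<Rightarrow> 'e set \<Rightarrow> ('e \<Rightarrow> 'v set) \<Rightarrow> 'v set \<Rightarrow> bool" where
  "separates_cycles V E inc X \<longleftrightarrow>
     X \<subseteq> V \<and> cycle_within V E inc X \<and> cycle_within V E inc (V - X)"

lemma multigraph_edgeE:
  assumes "multigraph V E inc" "g \<in> E"
  obtains p q where "inc g = {p, q}" "p \<noteq> q" "p \<in> V" "q \<in> V"
  using assms by (auto simp: multigraph_def card_2_iff)

lemma card_doubleton_Int_eq_1:
  assumes "p \<noteq> q"
  shows "card ({p, q} \<inter> W) = 1 \<longleftrightarrow> (p \<in> W \<longleftrightarrow> q \<notin> W)"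
  using assms by (cases "p \<in> W"; cases "q \<in> W") (auto simp: Int_insert_left)

lemma boundary_Diff:
  assumes "multigraph V E inc"
  shows "boundary E inc (V - X) = boundary E inc X"
proof -
  have "card (inc g \<inter> (V - X)) = 1 \<longleftrightarrow> card (inc g \<inter> X) = 1" if g: "g \<in> E" for g
  proof -
    obtain p q where "inc g = {p, q}" "p \<noteq> q" "p \<in> V" "q \<in> V"
      using multigraph_edgeE[OF assms g] .
    then show ?thesis using card_doubleton_Int_eq_1[of p q] by auto
  qed
  then show ?thesis by (auto simp: boundary_def)
qed

lemma boundary_Int_vertices:
  assumes "multigraph V E inc"
  shows "boundary E inc (W \<inter> V) = boundary E inc W"
proof -
  have "inc g \<inter> (W \<inter> V) = inc g \<inter> W" if "g \<in> E" for g
    using assms that by (auto simp: multigraph_def)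
  then show ?thesis by (auto simp: boundary_def)
qed

lemma separates_cycles_Diff:
  "separates_cycles V E inc X \<Longrightarrow> separates_cycles V E inc (V - X)"
  by (auto simp: separates_cycles_def double_diff)

lemma is_cycle_mono:
  "is_cycle V E inc vs es \<Longrightarrow> V \<subseteq> V' \<Longrightarrow> set es \<subseteq> E' \<Longrightarrow> is_cycle V' E' inc vs es"
  by (auto simp: is_cycle_def)

lemma is_cycle_cong:
  "\<forall>g\<in>set es. inc g = inc' g \<Longrightarrow> is_cycle V E inc vs es \<longleftrightarrow> is_cycle V E inc' vs es"
  by (auto simp: is_cycle_def)

lemma cycle_edge_subset:
  assumes "is_cycle V E inc vs es" "g \<in> set es"
  shows "inc g \<subseteq> set vs"
proof -
  obtain i where "i < length es" "g = es ! i" using assms(2) by (auto simp: in_set_conv_nth)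
  moreover have "0 < length es" using assms(1) unfolding is_cycle_def by linarith
  ultimately show ?thesis using assms(1) by (auto simp: is_cycle_def)
qed

lemma card_cycle_vertices:
  assumes "is_cycle V E inc vs es"
  shows "card (set vs) = length es" "card (set es) = length es"
  using assms by (auto simp: is_cycle_def distinct_card)

lemma cycle_vertex_in_two_edges:
  assumes c: "is_cycle V E inc vs es" and v: "v \<in> set vs"
  shows "2 \<le> card {g \<in> set es. v \<in> inc g}"
proof -
  define n where "n = length es"
  have n: "length vs = n" "2 \<le> n" using c by (auto simp: is_cycle_def n_def)
  obtain i where i: "i < n" "v = vs ! i" using v n by (auto simp: in_set_conv_nth)
  define j where "j = (i + n - 1) mod n"
  have j: "j < n" "(j + 1) mod n = i"
  proof -
    have "(i + n - 1 + 1) mod n = i" using n i by simp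
    then show "j < n" "(j + 1) mod n = i" using n by (simp_all add: j_def mod_Suc_eq)
  qed
  have "j \<noteq> i"
  proof
    assume "j = i"
    then have "(i + 1) mod n = i" using j by simp
    moreover have "i + 1 \<noteq> n" using n \<open>(i + 1) mod n = i\<close> by auto
    ultimately show False using i by simp
  qed
  then have "es ! i \<noteq> es ! j" using c i j by (auto simp: is_cycle_def n_def nth_eq_iff_index_eq)
  moreover have "{es ! i, es ! j} \<subseteq> {g \<in> set es. v \<in> inc g}"
    using c i j by (auto simp: is_cycle_def n_def)
  ultimately show ?thesis
    using card_mono[of "{g \<in> set es. v \<in> inc g}" "{es ! i, es ! j}"] by simp
qed

lemma cycle_vertices_connected:
  assumes c: "is_cycle V E inc vs es" and j: "j < length vs"
  shows "(\<lambda>a b. \<exists>g\<in>E. inc g = {a, b})\<^sup>*\<^sup>* (vs ! 0) (vs ! j)"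
  using j
proof (induction j)
  case (Suc j)
  then have "inc (es ! j) = {vs ! j, vs ! Suc j}" "es ! j \<in> E" using c by (auto simp: is_cycle_def)
  then show ?case using Suc by (auto intro: rtranclp.rtrancl_into_rtrancl)
qed simp

lemma INF_enat_attained:
  assumes "(INF x\<in>A. (f x :: enat)) = enat c"
  obtains x where "x \<in> A" "f x = enat c"
proof -
  have "A \<noteq> {}" using assms by (auto simp: top_enat_def)
  then have "(INF x\<in>A. f x) \<in> f ` A" by (auto intro: wellorder_InfI)
  then show ?thesis using assms that by auto
qed

lemma sum_degree_eq:
  assumes mg: "multigraph V E inc" and W: "W \<subseteq> V"
  shows "(\<Sum>v\<in>W. degree V E inc v) = 2 * card {g\<in>E. inc g \<subseteq> W} + card (boundary E inc W)"
proof -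
  have fE: "finite E" and fW: "finite W" using mg W by (auto simp: multigraph_def finite_subset)
  have "(\<Sum>v\<in>W. degree V E inc v) = (\<Sum>g\<in>E. card (inc g \<inter> W))"
    unfolding degree_def by (rule sum_multicount_gen[OF fW fE]) (auto intro: arg_cong[where f = card])
  also have "\<dots> = (\<Sum>g\<in>E. 2 * (if inc g \<subseteq> W then 1 else 0) + (if card (inc g \<inter> W) = 1 then 1 else 0))"
  proof (rule sum.cong[OF refl])
    fix g assume "g \<in> E"
    then obtain p q where "inc g = {p, q}" "p \<noteq> q" using multigraph_edgeE[OF mg] by metis
    then show "card (inc g \<inter> W) =
        2 * (if inc g \<subseteq> W then 1 else 0) + (if card (inc g \<inter> W) = 1 then 1 else 0)"
      by (cases "p \<in> W"; cases "q \<in> W") (auto simp: Int_insert_left)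
  qed
  also have "\<dots> = 2 * (\<Sum>g\<in>E. if inc g \<subseteq> W then 1 else 0) + (\<Sum>g\<in>E. if card (inc g \<inter> W) = 1 then 1 else 0)"
    by (simp add: sum.distrib sum_distrib_left)
  also have "\<dots> = 2 * card {g\<in>E. inc g \<subseteq> W} + card (boundary E inc W)"
    using sum.inter_filter[OF fE, of "\<lambda>_. 1 :: nat"] by (simp add: boundary_def)
  finally show ?thesis .
qed

lemma cubic_card_boundary:
  assumes "cubic V E inc" "W \<subseteq> V"
  shows "3 * card W = 2 * card {g\<in>E. inc g \<subseteq> W} + card (boundary E inc W)"
  using sum_degree_eq[of V E inc W] assms by (auto simp: cubic_def subset_iff)

lemma cubic_card_boundary_cycle:
  assumes cub: "cubic V E inc" and c: "is_cycle V E inc vs es"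
  shows "card (boundary E inc (set vs)) \<le> length es"
proof -
  have "finite E" using cub by (auto simp: cubic_def multigraph_def)
  moreover have "set es \<subseteq> {g\<in>E. inc g \<subseteq> set vs}"
    using c cycle_edge_subset[OF c] by (auto simp: is_cycle_def)
  ultimately have "card (set es) \<le> card {g\<in>E. inc g \<subseteq> set vs}"
    by (intro card_mono) auto
  moreover have "set vs \<subseteq> V" using c by (auto simp: is_cycle_def)
  then have "3 * card (set vs) = 2 * card {g\<in>E. inc g \<subseteq> set vs} + card (boundary E inc (set vs))"
    by (rule cubic_card_boundary[OF cub])
  ultimately show ?thesis using card_cycle_vertices[OF c] by linarith
qed

subsection \<open>Cycle-separating cuts as vertex sets\<close>

lemma cycle_separating_boundary:
  assumes mg: "multigraph V E inc" and X: "separates_cycles V E inc X"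
  shows "cycle_separating V E inc (boundary E inc X)"
proof -
  obtain vs1 es1 vs2 es2 where c1: "is_cycle V E inc vs1 es1" "set vs1 \<subseteq> X"
    and c2: "is_cycle V E inc vs2 es2" "set vs2 \<subseteq> V - X" and XV: "X \<subseteq> V"
    using X by (auto simp: separates_cycles_def cycle_within_def)
  have "vs1 \<noteq> []" "vs2 \<noteq> []" using c1 c2 by (auto simp: is_cycle_def)
  then have hd: "hd vs1 \<in> X" "hd vs2 \<in> V - X" using c1 c2 hd_in_set by blast+
  then have "edge_cut V E inc (boundary E inc X)"
    using XV by (auto simp: edge_cut_def boundary_def)
  moreover have es1: "set es1 \<subseteq> E - boundary E inc X" (is "_ \<subseteq> ?E'")
  proof
    fix g assume g: "g \<in> set es1"
    then have "g \<in> E" using c1 by (auto simp: is_cycle_def)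
    moreover have "inc g \<subseteq> X" using cycle_edge_subset[OF c1(1) g] c1(2) by auto
    ultimately show "g \<in> E - boundary E inc X"
      using mg by (auto simp: boundary_def multigraph_def Int_absorb2)
  qed
  moreover have es2: "set es2 \<subseteq> ?E'"
  proof
    fix g assume g: "g \<in> set es2"
    then have "g \<in> E" using c2 by (auto simp: is_cycle_def)
    moreover have "inc g \<inter> X = {}" using cycle_edge_subset[OF c2(1) g] c2(2) by auto
    ultimately show "g \<in> E - boundary E inc X" by (auto simp: boundary_def)
  qed
  moreover have "b \<in> X"
    if "(\<lambda>a b. \<exists>g\<in>E - boundary E inc X. inc g = {a, b})\<^sup>*\<^sup>* a b" "a \<in> X" for a b
    using that
  proof induction
    case (step b c)
    then obtain g where g: "g \<in> E" "g \<notin> boundary E inc X" "inc g = {b, c}" by auto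
    then have "b \<noteq> c" using mg by (auto simp: multigraph_def)
    then show ?case using g step card_doubleton_Int_eq_1[of b c X] by (auto simp: boundary_def)
  qed
  then have "\<not> connected_in V (E - boundary E inc X) inc (hd vs1) (hd vs2)"
    using hd by (auto simp: connected_in_def)
  ultimately show ?thesis
    using is_cycle_mono[OF c1(1) order.refl es1] is_cycle_mono[OF c2(1) order.refl es2]
    unfolding cycle_separating_def by blast
qed

text \<open>As side take the component of \<open>G - S\<close> containing one of the two cycles; its boundary
  lies inside \<open>S\<close>.\<close>

lemma cycle_separating_imp_separates_cycles:
  assumes mg: "multigraph V E inc" and S: "cycle_separating V E inc S"
  obtains X where "separates_cycles V E inc X" "card (boundary E inc X) \<le> card S"
proof -
  obtain vs1 es1 vs2 es2 where c1: "is_cycle V (E - S) inc vs1 es1"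
    and c2: "is_cycle V (E - S) inc vs2 es2"
    and nc: "\<not> connected_in V (E - S) inc (hd vs1) (hd vs2)"
    using S by (auto simp: cycle_separating_def)
  define R where "R = (\<lambda>a b. \<exists>g\<in>E - S. inc g = {a, b})"
  have "symp R" by (auto simp: R_def symp_def insert_commute)
  then have Rsym: "R\<^sup>*\<^sup>* a b \<Longrightarrow> R\<^sup>*\<^sup>* b a" for a b by (metis symp_rtranclp sympD)
  define K where "K = {v \<in> V. R\<^sup>*\<^sup>* (hd vs1) v}"
  have ne: "vs1 \<noteq> []" "vs2 \<noteq> []" using c1 c2 by (auto simp: is_cycle_def)
  then have hd: "hd vs1 = vs1 ! 0" "hd vs2 = vs2 ! 0" by (auto simp: hd_conv_nth)
  have sV: "set vs1 \<subseteq> V" "set vs2 \<subseteq> V" using c1 c2 by (auto simp: is_cycle_def)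
  have vs1: "set vs1 \<subseteq> K"
  proof
    fix v assume "v \<in> set vs1"
    then obtain j where "j < length vs1" "v = vs1 ! j" by (auto simp: in_set_conv_nth)
    then show "v \<in> K" using cycle_vertices_connected[OF c1] hd sV \<open>v \<in> set vs1\<close>
      by (auto simp: K_def R_def)
  qed
  have vs2: "set vs2 \<subseteq> V - K"
  proof
    fix v assume v: "v \<in> set vs2"
    then obtain j where j: "j < length vs2" "v = vs2 ! j" by (auto simp: in_set_conv_nth)
    have "R\<^sup>*\<^sup>* v (hd vs2)" using Rsym cycle_vertices_connected[OF c2 j(1)] j hd by (simp add: R_def)
    then have "v \<notin> K"
      using nc ne sV hd_in_set by (auto simp: K_def connected_in_def R_def dest: rtranclp_trans)
    then show "v \<in> V - K" using v sV by auto
  qed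
  have "boundary E inc K \<subseteq> S"
  proof
    fix g assume g: "g \<in> boundary E inc K"
    then have gE: "g \<in> E" "card (inc g \<inter> K) = 1" by (auto simp: boundary_def)
    obtain p q where pq: "inc g = {p, q}" "p \<noteq> q" "p \<in> V" "q \<in> V"
      using multigraph_edgeE[OF mg gE(1)] .
    show "g \<in> S"
    proof (rule ccontr)
      assume "g \<notin> S"
      then have "R p q" "R q p" using gE pq by (auto simp: R_def insert_commute)
      then have "p \<in> K \<longleftrightarrow> q \<in> K" using pq by (auto simp: K_def intro: rtranclp.rtrancl_into_rtrancl)
      then show False using gE pq card_doubleton_Int_eq_1[of p q K] by auto
    qed
  qed
  moreover have "finite S"
    using S mg by (auto simp: cycle_separating_def edge_cut_def multigraph_def)
  ultimately have "card (boundary E inc K) \<le> card S" by (rule card_mono[rotated])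
  moreover have "is_cycle V E inc vs1 es1" "is_cycle V E inc vs2 es2"
    using c1 c2 by (auto simp: is_cycle_def)
  then have "separates_cycles V E inc K"
    using vs1 vs2 unfolding separates_cycles_def cycle_within_def K_def by blast
  ultimately show ?thesis using that by blast
qed

lemma cyclic_connectivity_eq_INF_boundary:
  assumes "multigraph V E inc"
  shows "cyclic_connectivity V E inc =
    (INF X \<in> {X. separates_cycles V E inc X}. enat (card (boundary E inc X)))"
  unfolding cyclic_connectivity_def
proof (rule antisym)
  show "(INF S \<in> {S. cycle_separating V E inc S}. enat (card S))
      \<le> (INF X \<in> {X. separates_cycles V E inc X}. enat (card (boundary E inc X)))"
  proof (rule INF_greatest)
    fix X assume "X \<in> {X. separates_cycles V E inc X}"
    then have "boundary E inc X \<in> {S. cycle_separating V E inc S}"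
      using cycle_separating_boundary[OF assms] by blast
    then show "(INF S \<in> {S. cycle_separating V E inc S}. enat (card S)) \<le> enat (card (boundary E inc X))"
      by (rule INF_lower)
  qed
  show "(INF X \<in> {X. separates_cycles V E inc X}. enat (card (boundary E inc X)))
      \<le> (INF S \<in> {S. cycle_separating V E inc S}. enat (card S))"
  proof (rule INF_greatest)
    fix S assume "S \<in> {S. cycle_separating V E inc S}"
    then obtain X where "separates_cycles V E inc X" "card (boundary E inc X) \<le> card S"
      using cycle_separating_imp_separates_cycles[OF assms] by blast
    then show "(INF X \<in> {X. separates_cycles V E inc X}. enat (card (boundary E inc X))) \<le> enat (card S)"
      by (auto intro: INF_lower2)
  qed
qed

subsection \<open>Acyclic graphs\<close>

definition is_path :: "'v set \<Rightarrow> 'e set \<Rightarrow> ('e \<Rightarrow> 'v set) \<Rightarrow> 'v list \<Rightarrow> 'e list \<Rightarrow> bool" where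
  "is_path V E inc vs es \<longleftrightarrow> length vs = Suc (length es) \<and> distinct vs \<and> distinct es \<and>
     set vs \<subseteq> V \<and> set es \<subseteq> E \<and> (\<forall>i < length es. inc (es ! i) = {vs ! i, vs ! Suc i})"

lemma is_path_Cons:
  assumes p: "is_path V E inc vs es" and "w \<in> V" "w \<notin> set vs" "g \<in> E" "g \<notin> set es"
    and g: "inc g = {w, hd vs}"
  shows "is_path V E inc (w # vs) (g # es)"
proof -
  have "vs \<noteq> []" using p by (auto simp: is_path_def)
  then have "inc ((g # es) ! i) = {(w # vs) ! i, (w # vs) ! Suc i}" if "i < length (g # es)" for i
    using p g that by (cases i) (auto simp: is_path_def hd_conv_nth)
  then show ?thesis using assms by (auto simp: is_path_def)
qed

lemma is_path_edge_at_start: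
  assumes p: "is_path V E inc vs es" and g: "g \<in> set es" "hd vs \<in> inc g"
  shows "g = hd es"
proof -
  obtain i where i: "i < length es" "g = es ! i" using g by (auto simp: in_set_conv_nth)
  have l: "length vs = Suc (length es)" "distinct vs" using p by (auto simp: is_path_def)
  have "hd vs = vs ! i \<or> hd vs = vs ! Suc i"
    using p i g(2) by (auto simp: is_path_def)
  moreover have "vs \<noteq> []" using l by auto
  then have "hd vs = vs ! 0" by (rule hd_conv_nth)
  ultimately have "i = 0" using l i(1) by (auto simp: nth_eq_iff_index_eq)
  then show ?thesis using i by (simp add: hd_conv_nth)
qed

lemma is_path_close_cycle:
  assumes p: "is_path V E inc vs es" and j: "0 < j" "j < length vs"
    and g: "g \<in> E" "g \<notin> set es" "inc g = {vs ! j, hd vs}"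
  shows "is_cycle V E inc (take (Suc j) vs) (take j es @ [g])"
  unfolding is_cycle_def
proof (intro conjI allI impI)
  have l: "length vs = Suc (length es)" using p by (simp add: is_path_def)
  then show "length (take (Suc j) vs) = length (take j es @ [g])" "2 \<le> length (take j es @ [g])"
    using j by auto
  show "distinct (take (Suc j) vs)" "distinct (take j es @ [g])"
    using p g(2) by (auto simp: is_path_def dest: in_set_takeD)
  show "set (take (Suc j) vs) \<subseteq> V" "set (take j es @ [g]) \<subseteq> E"
    using p g(1) by (auto simp: is_path_def dest: in_set_takeD)
  fix i assume "i < length (take j es @ [g])"
  then have i: "i < Suc j" using j l by simp
  show "inc ((take j es @ [g]) ! i) =
      {take (Suc j) vs ! i, take (Suc j) vs ! ((i + 1) mod length (take j es @ [g]))}"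
  proof (cases "i < j")
    case True
    then have "(i + 1) mod length (take j es @ [g]) = Suc i" using j l by simp
    moreover have "inc (es ! i) = {vs ! i, vs ! Suc i}" using p True j l by (simp add: is_path_def)
    ultimately show ?thesis using True j l by (simp add: nth_append)
  next
    case False
    then have "i = j" using i by simp
    moreover have "(j + 1) mod length (take j es @ [g]) = 0" using j l by simp
    moreover have "vs \<noteq> []" using j by auto
    then have "hd vs = vs ! 0" by (rule hd_conv_nth)
    ultimately show ?thesis using g(3) j l by (simp add: nth_append insert_commute)
  qed
qed

text \<open>A longest path cannot be extended at its start vertex, so the second edge there
  closes a cycle.\<close>

lemma min_degree_two_has_cycle:
  assumes fin: "finite V" and "V \<noteq> {}"
    and edges: "\<forall>g\<in>E. inc g \<subseteq> V \<and> card (inc g) = 2"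
    and deg: "\<forall>v\<in>V. 2 \<le> card {g\<in>E. v \<in> inc g}"
  shows "\<exists>vs es. is_cycle V E inc vs es"
proof -
  obtain v0 where "v0 \<in> V" using \<open>V \<noteq> {}\<close> by blast
  then have "is_path V E inc [v0] []" by (simp add: is_path_def)
  moreover have "length vs < Suc (card V)" if "is_path V E inc vs es" for vs es
  proof -
    have "length vs = card (set vs)" using that by (simp add: is_path_def distinct_card)
    also have "\<dots> \<le> card V" using that fin by (intro card_mono) (auto simp: is_path_def)
    finally show ?thesis by simp
  qed
  ultimately obtain pe where p: "is_path V E inc (fst pe) (snd pe)"
    and longest: "\<forall>pe'. is_path V E inc (fst pe') (snd pe') \<longrightarrow> length (fst pe') \<le> length (fst pe)"
    using Lattices_Big.ex_has_greatest_nat[of "\<lambda>pe. is_path V E inc (fst pe) (snd pe)" "([v0], [])"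
        "\<lambda>pe. length (fst pe)" "Suc (card V)"]
    by auto
  obtain vs es where "pe = (vs, es)" by fastforce
  with p longest have p: "is_path V E inc vs es"
    and longest: "\<And>vs' es'. is_path V E inc vs' es' \<Longrightarrow> length vs' \<le> length vs"
    by auto
  define v where "v = hd vs"
  have "vs \<noteq> []" using p by (auto simp: is_path_def)
  then have v: "v \<in> V" "v = vs ! 0" using p by (auto simp: is_path_def v_def hd_conv_nth)
  have "\<exists>g\<in>E. v \<in> inc g \<and> g \<notin> set es"
  proof (rule ccontr)
    assume "\<not> ?thesis"
    then have "{g\<in>E. v \<in> inc g} \<subseteq> {hd es}"
      using is_path_edge_at_start[OF p] by (auto simp: v_def)
    then show False using deg v(1) card_mono[of "{hd es}" "{g\<in>E. v \<in> inc g}"] by auto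
  qed
  then obtain g where g: "g \<in> E" "v \<in> inc g" "g \<notin> set es" by blast
  obtain p q where pq: "inc g = {p, q}" "p \<noteq> q" "inc g \<subseteq> V"
    using edges g(1) by (auto simp: card_2_iff)
  define w where "w = (if p = v then q else p)"
  have w: "inc g = {w, v}" "w \<noteq> v" "w \<in> V"
    using pq g(2) by (auto simp: w_def)
  show ?thesis
  proof (cases "w \<in> set vs")
    case True
    then obtain j where "j < length vs" "w = vs ! j" by (auto simp: in_set_conv_nth)
    moreover have "j \<noteq> 0" using calculation w(2) v(2) by (cases j) auto
    ultimately show ?thesis using is_path_close_cycle[OF p _ _ g(1,3)] w(1) v_def by blast
  next
    case False
    then have "is_path V E inc (w # vs) (g # es)"
      using is_path_Cons[OF p w(3) _ g(1,3)] w(1) v_def by blast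
    from longest[OF this] show ?thesis by simp
  qed
qed

lemma acyclic_card_edges_less:
  assumes "finite V" "V \<noteq> {}" "finite E" "\<forall>g\<in>E. inc g \<subseteq> V \<and> card (inc g) = 2"
    and "\<not> (\<exists>vs es. is_cycle V E inc vs es)"
  shows "card E < card V"
  using assms
proof (induction "card V" arbitrary: V E rule: less_induct)
  case less
  then obtain v where v: "v \<in> V" "card {g\<in>E. v \<in> inc g} \<le> 1"
    using min_degree_two_has_cycle[of V E inc] by force
  define V' where "V' = V - {v}"
  define E' where "E' = {g\<in>E. v \<notin> inc g}"
  have "E = E' \<union> {g\<in>E. v \<in> inc g}" by (auto simp: E'_def)
  then have cE: "card E \<le> card E' + 1"
    using card_Un_le[of E' "{g\<in>E. v \<in> inc g}"] v(2) by simp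
  have cV: "card V = Suc (card V')"
    using card_Suc_Diff1[OF less.prems(1) v(1)] by (simp add: V'_def)
  show ?case
  proof (cases "V' = {}")
    case True
    then have "V = {v}" using v(1) by (auto simp: V'_def)
    have "E = {}"
    proof (rule ccontr)
      assume "E \<noteq> {}"
      then obtain g where "g \<in> E" by auto
      then have "inc g \<subseteq> {v}" "card (inc g) = 2" using less.prems(4) \<open>V = {v}\<close> by auto
      then show False using card_mono[of "{v}" "inc g"] by simp
    qed
    then show ?thesis using \<open>V = {v}\<close> by simp
  next
    case False
    have "\<not> is_cycle V' E' inc vs es" for vs es
    proof
      assume c: "is_cycle V' E' inc vs es"
      then have "set es \<subseteq> E" by (auto simp: is_cycle_def E'_def)
      then have "is_cycle V E inc vs es" using is_cycle_mono[OF c, of V E] by (auto simp: V'_def)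
      then show False using less.prems(5) by blast
    qed
    moreover have "\<forall>g\<in>E'. inc g \<subseteq> V' \<and> card (inc g) = 2"
      using less.prems(4) by (auto simp: V'_def E'_def)
    moreover have "finite V'" "finite E'" using less.prems by (auto simp: V'_def E'_def)
    ultimately have "card E' < card V'" using less.hyps[of V' E'] False cV by simp
    then show ?thesis using cE cV by simp
  qed
qed

subsection \<open>Subdivision\<close>

lemma subdivideE:
  assumes "subdivide V E inc a x V1 E1 inc1" "multigraph V E inc"
  obtains f1 f2 u w where "a \<in> E" "x \<notin> V" "inc a = {u, w}" "u \<noteq> w" "u \<in> V" "w \<in> V"
    "f1 \<notin> E" "f2 \<notin> E" "f1 \<noteq> f2" "V1 = insert x V" "E1 = (E - {a}) \<union> {f1, f2}"
    "inc1 f1 = {u, x}" "inc1 f2 = {x, w}" "\<forall>g \<in> E - {a}. inc1 g = inc g"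
proof -
  obtain f1 f2 u w where "a \<in> E" "x \<notin> V" "inc a = {u, w}" "f1 \<notin> E" "f2 \<notin> E" "f1 \<noteq> f2"
    "V1 = insert x V" "E1 = (E - {a}) \<union> {f1, f2}"
    "inc1 f1 = {u, x}" "inc1 f2 = {x, w}" "\<forall>g \<in> E - {a}. inc1 g = inc g"
    using assms(1) by (auto simp: subdivide_def)
  moreover from this have "u \<noteq> w" "u \<in> V" "w \<in> V"
    using assms(2) by (auto simp: multigraph_def card_2_iff doubleton_eq_iff)
  ultimately show ?thesis using that by blast
qed

lemma subdivide_multigraph:
  assumes s: "subdivide V E inc a x V1 E1 inc1" and mg: "multigraph V E inc"
  shows "multigraph V1 E1 inc1"
proof -
  obtain f1 f2 u w where "x \<notin> V" "u \<in> V" "w \<in> V" "V1 = insert x V" "E1 = (E - {a}) \<union> {f1, f2}"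
    "inc1 f1 = {u, x}" "inc1 f2 = {x, w}" "\<forall>g \<in> E - {a}. inc1 g = inc g"
    using subdivideE[OF s mg] by metis
  moreover have "u \<noteq> x" "w \<noteq> x" using calculation by auto
  ultimately show ?thesis using mg by (auto simp: multigraph_def)
qed

lemma subdivide_degree:
  assumes s: "subdivide V E inc a x V1 E1 inc1" and mg: "multigraph V E inc" and v: "v \<in> V1"
  shows "degree V1 E1 inc1 v = (if v = x then 2 else degree V E inc v)"
proof -
  obtain f1 f2 u w where h: "a \<in> E" "x \<notin> V" "inc a = {u, w}" "u \<noteq> w" "u \<in> V" "w \<in> V"
    "f1 \<notin> E" "f2 \<notin> E" "f1 \<noteq> f2" "V1 = insert x V" "E1 = (E - {a}) \<union> {f1, f2}"
    "inc1 f1 = {u, x}" "inc1 f2 = {x, w}" "\<forall>g \<in> E - {a}. inc1 g = inc g"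
    by (rule subdivideE[OF s mg])
  have fE: "finite E" using mg by (simp add: multigraph_def)
  have xE: "x \<notin> inc g" if "g \<in> E" for g using that mg h(2) by (auto simp: multigraph_def)
  show ?thesis
  proof (cases "v = x")
    case True
    then have "{g\<in>E1. v \<in> inc1 g} = {f1, f2}" using h xE by auto
    then show ?thesis using True h(9) by (simp add: degree_def)
  next
    case False
    define B where "B = {g\<in>E - {a}. v \<in> inc g}"
    have "{g\<in>E1. v \<in> inc1 g} = B \<union> (if v = u then {f1} else {}) \<union> (if v = w then {f2} else {})"
      using h False by (auto simp: B_def)
    moreover have "{g\<in>E. v \<in> inc g} = B \<union> (if v = u \<or> v = w then {a} else {})"
      using h by (auto simp: B_def)
    moreover have "finite B" "a \<notin> B" "f1 \<notin> B" "f2 \<notin> B"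
      using fE h by (auto simp: B_def)
    ultimately show ?thesis
      using h(4,9) False by (auto simp: degree_def card_insert_if)
  qed
qed

lemma card_boundary_subdivide:
  assumes s: "subdivide V E inc a x V1 E1 inc1" and mg: "multigraph V E inc"
  shows "card (boundary E inc W) \<le> card (boundary E1 inc1 W)"
proof -
  obtain f1 f2 u w where h: "a \<in> E" "x \<notin> V" "inc a = {u, w}" "u \<noteq> w" "u \<in> V" "w \<in> V"
    "f1 \<notin> E" "f2 \<notin> E" "f1 \<noteq> f2" "V1 = insert x V" "E1 = (E - {a}) \<union> {f1, f2}"
    "inc1 f1 = {u, x}" "inc1 f2 = {x, w}" "\<forall>g \<in> E - {a}. inc1 g = inc g"
    by (rule subdivideE[OF s mg])
  have ux: "u \<noteq> x" "x \<noteq> w" using h by auto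
  txt \<open>If \<open>a\<close> crosses the cut, so does one of its two halves.\<close>
  define half where "half = (if card (inc1 f1 \<inter> W) = 1 then f1 else f2)"
  define lift where "lift g = (if g = a then half else g)" for g
  have "inj_on lift (boundary E inc W)"
    using h by (auto simp: inj_on_def lift_def half_def boundary_def split: if_splits)
  moreover have "lift ` boundary E inc W \<subseteq> boundary E1 inc1 W"
  proof
    fix g' assume "g' \<in> lift ` boundary E inc W"
    then obtain g where g: "g \<in> boundary E inc W" "g' = lift g" by auto
    show "g' \<in> boundary E1 inc1 W"
    proof (cases "g = a")
      case True
      then have "u \<in> W \<longleftrightarrow> w \<notin> W"
        using g h card_doubleton_Int_eq_1[OF h(4)] by (simp add: boundary_def)
      then have "card (inc1 half \<inter> W) = 1"
        using card_doubleton_Int_eq_1[OF ux(1), of W] card_doubleton_Int_eq_1[OF ux(2), of W] h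
        by (auto simp: half_def)
      then show ?thesis using True g h by (auto simp: lift_def half_def boundary_def)
    next
      case False
      then show ?thesis using g h by (auto simp: lift_def boundary_def)
    qed
  qed
  moreover have "finite (boundary E1 inc1 W)"
    using subdivide_multigraph[OF s mg] by (simp add: boundary_def multigraph_def)
  ultimately show ?thesis by (metis card_inj_on_le)
qed

text \<open>The vertices of a cycle other than \<open>x\<close> have degree at least two in the graph they
  induce in \<open>G\<close> (the two halves of \<open>a\<close> are merged back into \<open>a\<close>), so they carry a cycle of \<open>G\<close>.\<close>

lemma cycle_within_subdivide:
  assumes s: "subdivide V E inc a x V1 E1 inc1" and mg: "multigraph V E inc"
    and "cycle_within V1 E1 inc1 W"
  shows "cycle_within V E inc W"
proof -
  obtain f1 f2 u w where h: "a \<in> E" "x \<notin> V" "inc a = {u, w}" "u \<noteq> w" "u \<in> V" "w \<in> V"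
    "f1 \<notin> E" "f2 \<notin> E" "f1 \<noteq> f2" "V1 = insert x V" "E1 = (E - {a}) \<union> {f1, f2}"
    "inc1 f1 = {u, x}" "inc1 f2 = {x, w}" "\<forall>g \<in> E - {a}. inc1 g = inc g"
    by (rule subdivideE[OF s mg])
  obtain vs es where c: "is_cycle V1 E1 inc1 vs es" and W: "set vs \<subseteq> W"
    using assms(3) by (auto simp: cycle_within_def)
  have fE: "finite E" and fV: "finite V" using mg by (auto simp: multigraph_def)
  have xE: "x \<notin> inc g" if "g \<in> E" for g using that mg h(2) by (auto simp: multigraph_def)
  have esE1: "set es \<subseteq> E1" using c by (auto simp: is_cycle_def)
  define U where "U = set vs - {x}"
  define F where "F = {g\<in>E. inc g \<subseteq> U}"
  have halves: "{f1, f2} \<subseteq> set es" if "x \<in> set vs"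
  proof -
    have "{g \<in> set es. x \<in> inc1 g} \<subseteq> {f1, f2}"
    proof
      fix g assume g: "g \<in> {g \<in> set es. x \<in> inc1 g}"
      show "g \<in> {f1, f2}"
      proof (rule ccontr)
        assume "g \<notin> {f1, f2}"
        then have "g \<in> E - {a}" using g esE1 h(11) by auto
        then show False using g h(14) xE by auto
      qed
    qed
    moreover have "2 \<le> card {g \<in> set es. x \<in> inc1 g}" by (rule cycle_vertex_in_two_edges[OF c that])
    ultimately have "{g \<in> set es. x \<in> inc1 g} = {f1, f2}"
      using h(9) by (intro card_seteq) auto
    then show ?thesis by auto
  qed
  have deg: "2 \<le> card {g\<in>F. v \<in> inc g}" if v: "v \<in> U" for v
  proof -
    define lift where "lift g = (if g \<in> {f1, f2} then a else g)" for g
    have "lift g \<in> {g\<in>F. v \<in> inc g}" if g: "g \<in> set es" "v \<in> inc1 g" for g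
    proof (cases "g \<in> {f1, f2}")
      case True
      then have "x \<in> set vs" using cycle_edge_subset[OF c g(1)] h(12,13) by auto
      then have "u \<in> set vs" "w \<in> set vs"
        using halves cycle_edge_subset[OF c] h(12,13) by blast+
      then have "inc a \<subseteq> U" using h(2,3,5,6) by (auto simp: U_def)
      moreover have "v \<in> inc a" using True g(2) v h(3,12,13) by (auto simp: U_def)
      ultimately show ?thesis using True h(1) by (simp add: lift_def F_def)
    next
      case False
      then have "g \<in> E - {a}" using g(1) esE1 h(11) by auto
      then have "g \<in> E" "inc g = inc1 g" using h(14) by auto
      moreover have "inc g \<subseteq> U"
        using cycle_edge_subset[OF c g(1)] xE[OF \<open>g \<in> E\<close>] \<open>inc g = inc1 g\<close> by (auto simp: U_def)
      ultimately show ?thesis using False g(2) by (simp add: lift_def F_def)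
    qed
    moreover have "inj_on lift {g \<in> set es. v \<in> inc1 g}"
    proof -
      have "a \<notin> set es" using esE1 h(1,7,8,11) by auto
      moreover have "\<not> (v \<in> inc1 f1 \<and> v \<in> inc1 f2)" using v h(4,12,13) by (auto simp: U_def)
      ultimately show ?thesis by (auto simp: inj_on_def lift_def)
    qed
    ultimately have "card {g \<in> set es. v \<in> inc1 g} \<le> card {g\<in>F. v \<in> inc g}"
      using fE by (intro card_inj_on_le) (auto simp: F_def)
    moreover have "v \<in> set vs" using v by (simp add: U_def)
    then have "2 \<le> card {g \<in> set es. v \<in> inc1 g}" by (rule cycle_vertex_in_two_edges[OF c])
    ultimately show ?thesis by linarith
  qed
  have "U \<noteq> {}"
  proof
    assume "U = {}"
    then have "set vs \<subseteq> {x}" by (auto simp: U_def)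
    then have "card (set vs) \<le> 1" using card_mono[of "{x}" "set vs"] by simp
    then show False using c card_cycle_vertices(1)[OF c] by (simp add: is_cycle_def)
  qed
  moreover have "U \<subseteq> V" using c h(10) by (auto simp: U_def is_cycle_def)
  ultimately obtain vs' es' where c': "is_cycle U F inc vs' es'"
    using min_degree_two_has_cycle[of U F inc] deg fV mg
    by (auto simp: F_def multigraph_def finite_subset)
  then have "is_cycle V E inc vs' es'"
    using \<open>U \<subseteq> V\<close> by (rule is_cycle_mono) (use c' in \<open>auto simp: is_cycle_def F_def\<close>)
  moreover have "set vs' \<subseteq> W" using c' W by (auto simp: is_cycle_def U_def)
  ultimately show ?thesis by (auto simp: cycle_within_def)
qed

subsection \<open>Minimum cycle-separating cuts\<close>

lemma card_induced_edges_less: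
  assumes mg: "multigraph V E inc" and R: "R \<subseteq> V" "R \<noteq> {}" and acyclic: "\<not> cycle_within V E inc R"
  shows "card {g\<in>E. inc g \<subseteq> R} < card R"
proof (rule acyclic_card_edges_less)
  show "finite R" "finite {g\<in>E. inc g \<subseteq> R}" using mg R by (auto simp: multigraph_def finite_subset)
  show "\<forall>g\<in>{g\<in>E. inc g \<subseteq> R}. inc g \<subseteq> R \<and> card (inc g) = 2" using mg by (auto simp: multigraph_def)
  show "\<not> (\<exists>vs es. is_cycle R {g\<in>E. inc g \<subseteq> R} inc vs es)"
  proof
    assume "\<exists>vs es. is_cycle R {g\<in>E. inc g \<subseteq> R} inc vs es"
    then obtain vs es where c: "is_cycle R {g\<in>E. inc g \<subseteq> R} inc vs es" by blast
    then have "is_cycle V E inc vs es" using R(1) by (rule is_cycle_mono) (use c in \<open>auto simp: is_cycle_def\<close>)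
    moreover have "set vs \<subseteq> R" using c by (simp add: is_cycle_def)
    ultimately show False using acyclic by (auto simp: cycle_within_def)
  qed
qed (fact R(2))

lemma cubic_card_less_boundary:
  assumes cub: "cubic V E inc" and R: "R \<subseteq> V" "R \<noteq> {}" and "\<not> cycle_within V E inc R"
  shows "card R < card (boundary E inc R)"
  using cubic_card_boundary[OF cub R(1)] card_induced_edges_less[OF _ R assms(4)] cub
  by (simp add: cubic_def)

lemma cubic_card_le_boundary:
  assumes cub: "cubic V E inc" and Z: "Z \<subseteq> V" "Z \<noteq> {}"
    and acyclic: "\<not> cycle_within V (E - {e}) inc Z"
  shows "card Z \<le> card (boundary E inc Z)"
proof -
  have mg: "multigraph V E inc" using cub by (simp add: cubic_def)
  then have "multigraph V (E - {e}) inc" by (auto simp: multigraph_def)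
  then have "card {g\<in>E - {e}. inc g \<subseteq> Z} < card Z" by (rule card_induced_edges_less[OF _ Z acyclic])
  moreover have "card {g\<in>E. inc g \<subseteq> Z} \<le> card {g\<in>E - {e}. inc g \<subseteq> Z} + 1"
  proof -
    have fin: "finite {g\<in>E - {e}. inc g \<subseteq> Z}" using mg by (simp add: multigraph_def)
    have "card {g\<in>E. inc g \<subseteq> Z} \<le> card (insert e {g\<in>E - {e}. inc g \<subseteq> Z})"
      using fin by (intro card_mono) auto
    also have "\<dots> \<le> card {g\<in>E - {e}. inc g \<subseteq> Z} + 1" using fin by (simp add: card_insert_if)
    finally show ?thesis .
  qed
  ultimately show ?thesis using cubic_card_boundary[OF cub Z(1)] by linarith
qed

lemma shortest_cycle_through_le:
  "is_cycle V E inc vs es \<Longrightarrow> e \<in> set es \<Longrightarrow> shortest_cycle_through V E inc e \<le> enat (length es)"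
  unfolding shortest_cycle_through_def by (rule INF_lower) blast

lemma shortest_cycle_through_attained:
  assumes "is_cycle V E inc vs es" "e \<in> set es"
  obtains vs0 es0 where "is_cycle V E inc vs0 es0" "e \<in> set es0"
    "shortest_cycle_through V E inc e = enat (length es0)"
proof -
  obtain l where "shortest_cycle_through V E inc e = enat l"
    using shortest_cycle_through_le[OF assms] by (cases "shortest_cycle_through V E inc e") auto
  then show ?thesis
    using that unfolding shortest_cycle_through_def by (auto elim: INF_enat_attained)
qed

text \<open>Counting vertices, with \<open>s = |\<delta>(Z)|\<close>: \<open>|Z| \<le> s\<close> as all cycles in \<open>Z\<close> use \<open>e\<close>, the other
  side has at least \<open>s\<close> vertices by minimality, and a shortest cycle through \<open>e\<close> has at most
  \<open>|Z|\<close> vertices and at most as many boundary edges. So either that cycle is itself the side of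
  a cycle-separating cut, or its complement is acyclic with too many vertices.\<close>

lemma min_boundary_eq_shortest_cycle_through:
  assumes cub: "cubic V E inc" and Z: "separates_cycles V E inc Z"
    and acyclic: "\<not> cycle_within V (E - {e}) inc Z"
    and min: "\<forall>X. separates_cycles V E inc X \<longrightarrow> card (boundary E inc Z) \<le> card (boundary E inc X)"
  shows "enat (card (boundary E inc Z)) = shortest_cycle_through V E inc e"
proof -
  define s where "s = card (boundary E inc Z)"
  have mg: "multigraph V E inc" using cub by (simp add: cubic_def)
  then have fV: "finite V" by (simp add: multigraph_def)
  obtain vsD esD where D: "is_cycle V E inc vsD esD" "set vsD \<subseteq> Z" and ZV: "Z \<subseteq> V"
    using Z by (auto simp: separates_cycles_def cycle_within_def)
  have eD: "e \<in> set esD"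
  proof (rule ccontr)
    assume "e \<notin> set esD"
    then have "is_cycle V (E - {e}) inc vsD esD" using D(1) by (auto simp: is_cycle_def)
    then show False using acyclic D(2) by (auto simp: cycle_within_def)
  qed
  obtain vs0 es0 where C0: "is_cycle V E inc vs0 es0" "e \<in> set es0"
    and l0: "shortest_cycle_through V E inc e = enat (length es0)"
    using shortest_cycle_through_attained[OF D(1) eD] by metis
  have "Z \<noteq> {}" using D by (auto simp: is_cycle_def)
  then have Zs: "card Z \<le> s"
    unfolding s_def by (rule cubic_card_le_boundary[OF cub ZV _ acyclic])
  have l0Z: "length es0 \<le> card Z"
  proof -
    have "enat (length es0) \<le> enat (length esD)"
      using l0 shortest_cycle_through_le[OF D(1) eD] by simp
    also have "length esD = card (set vsD)" using card_cycle_vertices(1)[OF D(1)] by simp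
    also have "\<dots> \<le> card Z" using D(2) ZV fV by (intro card_mono) (auto simp: finite_subset)
    finally show ?thesis by simp
  qed
  have sB: "s \<le> card (V - Z)"
  proof -
    obtain vs2 es2 where c2: "is_cycle V E inc vs2 es2" "set vs2 \<subseteq> V - Z"
      using Z by (auto simp: separates_cycles_def cycle_within_def)
    then have "separates_cycles V E inc (set vs2)"
      using D ZV unfolding separates_cycles_def cycle_within_def by (blast intro: order.trans)
    then have "s \<le> card (boundary E inc (set vs2))" using min by (simp add: s_def)
    also have "\<dots> \<le> length es2" by (rule cubic_card_boundary_cycle[OF cub c2(1)])
    also have "\<dots> = card (set vs2)" using card_cycle_vertices(1)[OF c2(1)] by simp
    also have "\<dots> \<le> card (V - Z)" using c2(2) fV by (intro card_mono) auto
    finally show ?thesis .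
  qed
  define R0 where "R0 = set vs0"
  have R0V: "R0 \<subseteq> V" using C0 by (auto simp: R0_def is_cycle_def)
  have cR0: "card R0 = length es0" using card_cycle_vertices(1)[OF C0(1)] by (simp add: R0_def)
  have bR0: "card (boundary E inc R0) \<le> length es0"
    using cubic_card_boundary_cycle[OF cub C0(1)] by (simp add: R0_def)
  show ?thesis
  proof (cases "cycle_within V E inc (V - R0)")
    case True
    then have "separates_cycles V E inc R0"
      using R0V C0 by (auto simp: separates_cycles_def cycle_within_def R0_def)
    then have "s \<le> length es0" using min bR0 by (fastforce simp: s_def)
    then show ?thesis using Zs l0Z l0 by (simp add: s_def)
  next
    case False
    have "card V = card Z + card (V - Z)" using ZV fV by (simp add: card_Diff_subset card_mono finite_subset)
    moreover have "card (V - R0) = card V - length es0"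
      using R0V fV cR0 by (simp add: card_Diff_subset finite_subset)
    ultimately have "s \<le> card (V - R0)" using Zs l0Z sB by linarith
    moreover have "2 \<le> length es0" using C0(1) by (simp add: is_cycle_def)
    then have "card (V - R0) \<noteq> 0" using calculation Zs l0Z by linarith
    then have "card (V - R0) < card (boundary E inc (V - R0))"
      using cubic_card_less_boundary[OF cub _ _ False] by (metis Diff_subset card.empty)
    moreover have "card (boundary E inc (V - R0)) \<le> length es0" using bR0 boundary_Diff[OF mg] by simp
    ultimately have False using Zs l0Z by linarith
    then show ?thesis ..
  qed
qed

subsection \<open>I-extensions\<close>

lemma degree_insert_edge:
  assumes "e \<notin> E" "\<forall>g\<in>E. inc' g = inc g" "finite E"
  shows "degree V' (insert e E) inc' v = degree V E inc v + (if v \<in> inc' e then 1 else 0)"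
proof -
  have "{g\<in>insert e E. v \<in> inc' g} = {g\<in>E. v \<in> inc g} \<union> (if v \<in> inc' e then {e} else {})"
    using assms by auto
  then show ?thesis using assms by (simp add: degree_def)
qed

lemma I_extension_cubic:
  assumes cub: "cubic V E inc" and ext: "I_extension V E inc V' E' inc' e"
  shows "cubic V' E' inc'"
proof -
  obtain a x V1 E1 inc1 b y V2 E2 inc2 where s1: "subdivide V E inc a x V1 E1 inc1"
    and s2: "subdivide V1 E1 inc1 b y V2 E2 inc2" and e: "e \<notin> E2" "V' = V2" "E' = insert e E2"
    "inc' e = {x, y}" "\<forall>g\<in>E2. inc' g = inc2 g"
    using ext unfolding I_extension_def by blast
  have mg: "multigraph V E inc" using cub by (simp add: cubic_def)
  have mg1: "multigraph V1 E1 inc1" by (rule subdivide_multigraph[OF s1 mg])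
  have mg2: "multigraph V2 E2 inc2" by (rule subdivide_multigraph[OF s2 mg1])
  have V12: "V1 = insert x V" "V2 = insert y V1" "x \<notin> V" "y \<notin> V1"
    using s1 s2 by (auto simp: subdivide_def)
  have "multigraph V' E' inc'"
    using mg2 e V12 by (auto simp: multigraph_def)
  moreover have "degree V' E' inc' v = 3" if "v \<in> V'" for v
  proof -
    have "degree V' E' inc' v = degree V2 E2 inc2 v + (if v \<in> {x, y} then 1 else 0)"
      using degree_insert_edge[of e E2 inc' inc2] e mg2 by (simp add: multigraph_def)
    then show ?thesis
      using that e V12 subdivide_degree[OF s2 mg1, of v] subdivide_degree[OF s1 mg, of v] cub
      by (auto simp: cubic_def split: if_splits)
  qed
  ultimately show ?thesis by (simp add: cubic_def)
qed

lemma I_extension_cycle_within: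
  assumes mg: "multigraph V E inc" and ext: "I_extension V E inc V' E' inc' e"
    and "cycle_within V' (E' - {e}) inc' W"
  shows "cycle_within V E inc W"
proof -
  obtain a x V1 E1 inc1 b y V2 E2 inc2 where s1: "subdivide V E inc a x V1 E1 inc1"
    and s2: "subdivide V1 E1 inc1 b y V2 E2 inc2" and e: "e \<notin> E2" "V' = V2" "E' = insert e E2"
    "\<forall>g\<in>E2. inc' g = inc2 g"
    using ext unfolding I_extension_def by blast
  obtain vs es where c: "is_cycle V' (E' - {e}) inc' vs es" "set vs \<subseteq> W"
    using assms(3) by (auto simp: cycle_within_def)
  then have "set es \<subseteq> E2" using e by (auto simp: is_cycle_def)
  moreover have "is_cycle V2 E2 inc' vs es" using c(1) calculation e by (auto simp: is_cycle_def)
  moreover have "\<forall>g\<in>set es. inc' g = inc2 g" using calculation(1) e by auto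
  ultimately have "is_cycle V2 E2 inc2 vs es" using is_cycle_cong by metis
  then have "cycle_within V2 E2 inc2 W" using c(2) by (auto simp: cycle_within_def)
  then show ?thesis
    using cycle_within_subdivide[OF s1 mg] cycle_within_subdivide[OF s2 subdivide_multigraph[OF s1 mg]]
    by blast
qed

lemma I_extension_card_boundary:
  assumes mg: "multigraph V E inc" and ext: "I_extension V E inc V' E' inc' e"
  shows "card (boundary E inc W) \<le> card (boundary E' inc' W)"
proof -
  obtain a x V1 E1 inc1 b y V2 E2 inc2 where s1: "subdivide V E inc a x V1 E1 inc1"
    and s2: "subdivide V1 E1 inc1 b y V2 E2 inc2" and e: "E' = insert e E2"
    "\<forall>g\<in>E2. inc' g = inc2 g"
    using ext unfolding I_extension_def by blast
  have mg1: "multigraph V1 E1 inc1" by (rule subdivide_multigraph[OF s1 mg])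
  have "finite E2" using subdivide_multigraph[OF s2 mg1] by (simp add: multigraph_def)
  then have "card (boundary E2 inc2 W) \<le> card (boundary E' inc' W)"
    using e by (intro card_mono) (auto simp: boundary_def)
  then show ?thesis
    using card_boundary_subdivide[OF s1 mg, of W] card_boundary_subdivide[OF s2 mg1, of W] by linarith
qed

lemma I_extension_cyclic_connectivity:
  assumes cub: "cubic V E inc" and k: "cyclic_connectivity V E inc = enat k"
    and ext: "I_extension V E inc V' E' inc' e"
  shows "cyclic_connectivity V' E' inc' \<ge> enat k \<or>
    cyclic_connectivity V' E' inc' = shortest_cycle_through V' E' inc' e"
proof (cases "cyclic_connectivity V' E' inc' \<ge> enat k")
  case False
  then obtain c where c: "cyclic_connectivity V' E' inc' = enat c" "c < k"
    by (cases "cyclic_connectivity V' E' inc'") auto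
  have mg: "multigraph V E inc" using cub by (simp add: cubic_def)
  have cub': "cubic V' E' inc'" by (rule I_extension_cubic[OF cub ext])
  then have mg': "multigraph V' E' inc'" by (simp add: cubic_def)
  note cc' = cyclic_connectivity_eq_INF_boundary[OF mg']
  obtain A where A: "separates_cycles V' E' inc' A" "card (boundary E' inc' A) = c"
    using c(1) unfolding cc' by (auto elim: INF_enat_attained)
  have min: "card (boundary E' inc' A) \<le> card (boundary E' inc' X)"
    if "separates_cycles V' E' inc' X" for X
  proof -
    have "enat c \<le> enat (card (boundary E' inc' X))"
      using that unfolding c(1)[symmetric] cc' by (auto intro: INF_lower)
    then show ?thesis using A(2) by simp
  qed
  have "\<not> (cycle_within V' (E' - {e}) inc' A \<and> cycle_within V' (E' - {e}) inc' (V' - A))"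
  proof
    assume "cycle_within V' (E' - {e}) inc' A \<and> cycle_within V' (E' - {e}) inc' (V' - A)"
    then obtain vs1 es1 vs2 es2 where "is_cycle V E inc vs1 es1" "set vs1 \<subseteq> A"
      "is_cycle V E inc vs2 es2" "set vs2 \<subseteq> V' - A"
      using I_extension_cycle_within[OF mg ext] unfolding cycle_within_def by meson
    moreover from this have "set vs1 \<subseteq> V" "set vs2 \<subseteq> V" by (auto simp: is_cycle_def)
    ultimately have "separates_cycles V E inc (A \<inter> V)"
      unfolding separates_cycles_def cycle_within_def by blast
    then have "enat k \<le> enat (card (boundary E inc (A \<inter> V)))"
      using k cyclic_connectivity_eq_INF_boundary[OF mg] by (metis INF_lower mem_Collect_eq)
    also have "card (boundary E inc (A \<inter> V)) \<le> c"
      using boundary_Int_vertices[OF mg] I_extension_card_boundary[OF mg ext, of A] A(2) by simp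
    finally show False using c(2) by simp
  qed
  then obtain Z where Z: "separates_cycles V' E' inc' Z" "\<not> cycle_within V' (E' - {e}) inc' Z"
    "boundary E' inc' Z = boundary E' inc' A"
    using A(1) separates_cycles_Diff[OF A(1)] boundary_Diff[OF mg'] by blast
  have "enat (card (boundary E' inc' Z)) = shortest_cycle_through V' E' inc' e"
    by (rule min_boundary_eq_shortest_cycle_through[OF cub' Z(1,2)]) (use min Z(3) in auto)
  then show ?thesis using A(2) Z(3) c(1) by simp
qed simp

lemma shortest_cycle_through_ge_4:
  assumes no_triangle: "\<not> (\<exists>vs es. is_cycle V E inc vs es \<and> length es = 3 \<and> e \<in> set es)"
    and no_parallel: "\<not> (\<exists>f\<in>E. f \<noteq> e \<and> inc f = inc e)"
  shows "4 \<le> shortest_cycle_through V E inc e"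
  unfolding shortest_cycle_through_def
proof (rule INF_greatest)
  fix es assume "es \<in> {es. \<exists>vs. is_cycle V E inc vs es \<and> e \<in> set es}"
  then obtain vs where c: "is_cycle V E inc vs es" "e \<in> set es" by auto
  have "length es \<noteq> 2"
  proof
    assume l: "length es = 2"
    then have "inc (es ! 0) = inc (es ! 1)" "es ! 0 \<noteq> es ! 1" "es ! 0 \<in> E" "es ! 1 \<in> E"
      using c by (auto simp: is_cycle_def nth_eq_iff_index_eq insert_commute)
    moreover have "e = es ! 0 \<or> e = es ! 1" using c(2) l by (auto simp: in_set_conv_nth less_2_cases_iff)
    ultimately show False using no_parallel by metis
  qed
  moreover have "length es \<noteq> 3" using c no_triangle by blast
  moreover have "2 \<le> length es" using c(1) by (simp add: is_cycle_def)
  ultimately show "4 \<le> enat (length es)" by (simp add: numeral_eq_enat)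
qed

theorem lemma5:
  fixes V V' :: "'v set" and E E' :: "'e set"
    and inc inc' :: "'e \<Rightarrow> 'v set" and e :: 'e and k :: nat
  assumes "cubic V E inc"
    and "cyclic_connectivity V E inc = enat k"
    and "I_extension V E inc V' E' inc' e"
  shows "(cyclic_connectivity V' E' inc' \<ge> enat k \<or>
          cyclic_connectivity V' E' inc' = shortest_cycle_through V' E' inc' e)
       \<and> ((k \<ge> 4 \<and>
           \<not> (\<exists>vs es. is_cycle V' E' inc' vs es \<and> length es = 3 \<and> e \<in> set es) \<and>
           \<not> (\<exists>f\<in>E'. f \<noteq> e \<and> inc' f = inc' e))
          \<longrightarrow> cyclic_connectivity V' E' inc' \<ge> 4)"
proof (intro conjI impI)
  note cc = I_extension_cyclic_connectivity[OF assms]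
  then show "cyclic_connectivity V' E' inc' \<ge> enat k \<or>
      cyclic_connectivity V' E' inc' = shortest_cycle_through V' E' inc' e" .
  assume h: "k \<ge> 4 \<and>
    \<not> (\<exists>vs es. is_cycle V' E' inc' vs es \<and> length es = 3 \<and> e \<in> set es) \<and>
    \<not> (\<exists>f\<in>E'. f \<noteq> e \<and> inc' f = inc' e)"
  then have "(4 :: enat) \<le> enat k" by (simp add: numeral_eq_enat)
  moreover have "4 \<le> shortest_cycle_through V' E' inc' e"
    using h by (intro shortest_cycle_through_ge_4) auto
  ultimately show "cyclic_connectivity V' E' inc' \<ge> 4" using cc order.trans by metis
qed

end
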